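(* The map $\phi:\mathcal{B}\to\mathrm{GL}(2,\mathbb{Z}[t,t^{-1},(1+t)^{-1}])$ is an injective group homomorphism satisfying $\det\phi(A)=\det A$ for all $A\in\mathcal{B}$.
   Context: For a matrix $A$ with Laurent polynomial entries, $\overline{A}$ denotes the matrix obtained by substituting $t\mapsto t^{-1}$ in every entry. Let $J_3=\begin{pmatrix}1&-t^{-1}&-t^{-1}\\-t&1&-t^{-1}\\-t&-t&1\end{pmatrix}$, $v=(t,t^2,t^3)$ (a row vector) and $\vec{1}=(1,1,1)^T$. The formal Burau group is $\mathcal{B}=\{A\in\mathrm{GL}(3,\mathbb{Z}[t,t^{-1}]) : vA=v,\ A\vec 1=\vec 1,\ \overline{A}J_3A^T=J_3\}$. For $A=(A_{ij})\in\mathcal{B}$ put, for $k=1,2$, $f_{k1}=A_{k1}(1+t+t^2)-1$, $f_{k2}=A_{k1}+A_{k2}(1+t)-1$, and $g_{kl}=f_{kl}/(t(1+t))$. Define $\phi(A)=\begin{pmatrix}g_{11}&g_{12}\\ t^{-1}g_{11}+(1+t)g_{21}& t^{-1}g_{12}+(1+t)g_{22}\end{pmatrix}$. *)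

theory Defs
  imports "HOL-Analysis.Analysis" "HOL-Computational_Algebra.Formal_Laurent_Series"
begin

text \<open>The ring Z[t,t^-1] is the subring of integer-coefficient, finitely supported series;
  Z[t,t^-1,(1+t)^-1] is obtained by additionally inverting 1+t.\<close>

type_synonym K = "rat fls"

definition tt :: K where "tt = fls_X"

definition laurent :: "K set" where
  "laurent = {f. finite {n. fls_nth f n \<noteq> 0} \<and> (\<forall>n. fls_nth f n \<in> \<int>)}"

definition laurent_loc :: "K set" where
  "laurent_loc = {p * inverse ((1 + tt) ^ m) | p m. p \<in> laurent}"

text \<open>Bar involution t \<mapsto> t^-1 (meaningful on Laurent polynomials).\<close>
definition bar :: "K \<Rightarrow> K" where
  "bar f = Abs_fls (\<lambda>n. fls_nth f (- n))"

definition bar_mat :: "K^'n^'m \<Rightarrow> K^'n^'m" where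
  "bar_mat A = (\<chi> i j. bar (A $ i $ j))"

definition GL_over :: "K set \<Rightarrow> (K^'n^'n) set" where
  "GL_over S = {A. (\<forall>i j. A $ i $ j \<in> S) \<and>
      (\<exists>B. (\<forall>i j. B $ i $ j \<in> S) \<and> A ** B = mat 1 \<and> B ** A = mat 1)}"

definition J3 :: "K^3^3" where
  "J3 = vector [vector [1, - inverse tt, - inverse tt],
                vector [- tt, 1, - inverse tt],
                vector [- tt, - tt, 1]]"

definition vrow :: "K^3" where
  "vrow = vector [tt, tt^2, tt^3]"

definition ones3 :: "K^3" where
  "ones3 = vector [1, 1, 1]"

definition burau :: "(K^3^3) set" where
  "burau = {A \<in> GL_over laurent. vrow v* A = vrow \<and> A *v ones3 = ones3 \<and>
                bar_mat A ** J3 ** transpose A = J3}"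

definition fk1 :: "K^3^3 \<Rightarrow> 3 \<Rightarrow> K" where
  "fk1 A k = A $ k $ 1 * (1 + tt + tt^2) - 1"

definition fk2 :: "K^3^3 \<Rightarrow> 3 \<Rightarrow> K" where
  "fk2 A k = A $ k $ 1 + A $ k $ 2 * (1 + tt) - 1"

definition g1 :: "K^3^3 \<Rightarrow> 3 \<Rightarrow> K" where
  "g1 A k = fk1 A k / (tt * (1 + tt))"

definition g2 :: "K^3^3 \<Rightarrow> 3 \<Rightarrow> K" where
  "g2 A k = fk2 A k / (tt * (1 + tt))"

definition phi :: "K^3^3 \<Rightarrow> K^2^2" where
  "phi A = vector [vector [g1 A 1, g2 A 1],
                   vector [inverse tt * g1 A 1 + (1 + tt) * g1 A 2,
                           inverse tt * g2 A 1 + (1 + tt) * g2 A 2]]"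

end

theory Submission
  imports Defs
begin

text \<open>The conditions \<open>v A = v\<close> and \<open>A 1 = 1\<close> express the third column and the third row of \<open>A\<close>
  affinely through the upper left block \<open>A\<^sub>1\<^sub>1, A\<^sub>1\<^sub>2, A\<^sub>2\<^sub>1, A\<^sub>2\<^sub>2\<close>. The entries of \<open>\<phi>(A)\<close> are affine
  in that block with coefficients built from the nonzero series \<open>t\<close>, \<open>1 + t\<close> and \<open>1 + t + t\<^sup>2\<close>,
  so \<open>\<phi>\<close> is injective, and multiplicativity and \<open>det \<phi>(A) = det A\<close> become rational identities in
  the free entries. Since \<open>\<phi>\<close> divides only by \<open>t(1 + t)\<close>, it takes values in \<open>\<int>[t, t\<^sup>-\<^sup>1, (1 + t)\<^sup>-\<^sup>1]\<close>.\<close>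

lemma laurent_iff:
  "f \<in> laurent \<longleftrightarrow> (\<exists>N. \<forall>n>N. fls_nth f n = 0) \<and> (\<forall>n. fls_nth f n \<in> \<int>)"
proof
  assume "f \<in> laurent"
  then have fin: "finite {n. fls_nth f n \<noteq> 0}" and ints: "\<forall>n. fls_nth f n \<in> \<int>"
    by (auto simp: laurent_def)
  from bdd_above_finite[OF fin] obtain N where "\<forall>n\<in>{n. fls_nth f n \<noteq> 0}. n \<le> N"
    unfolding bdd_above_def by blast
  then have "\<forall>n>N. fls_nth f n = 0" by force
  with ints show "(\<exists>N. \<forall>n>N. fls_nth f n = 0) \<and> (\<forall>n. fls_nth f n \<in> \<int>)" by blast
next
  assume "(\<exists>N. \<forall>n>N. fls_nth f n = 0) \<and> (\<forall>n. fls_nth f n \<in> \<int>)"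
  then obtain N where N: "\<forall>n>N. fls_nth f n = 0" and ints: "\<forall>n. fls_nth f n \<in> \<int>" by blast
  have "{n. fls_nth f n \<noteq> 0} \<subseteq> {fls_subdegree f..N}"
    using N fls_eq0_below_subdegree by (force simp: not_less[symmetric])
  then have "finite {n. fls_nth f n \<noteq> 0}" using finite_subset by blast
  with ints show "f \<in> laurent" by (simp add: laurent_def)
qed

lemma laurent_add: "f \<in> laurent \<Longrightarrow> g \<in> laurent \<Longrightarrow> f + g \<in> laurent"
  unfolding laurent_iff by (metis Ints_add add.right_neutral fls_plus_nth max.strict_boundedE)

lemma laurent_uminus: "f \<in> laurent \<Longrightarrow> - f \<in> laurent"
  unfolding laurent_iff by auto

lemma laurent_diff: "f \<in> laurent \<Longrightarrow> g \<in> laurent \<Longrightarrow> f - g \<in> laurent"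
  using laurent_add[of f "- g"] laurent_uminus[of g] by simp

lemma laurent_mult:
  assumes "f \<in> laurent" "g \<in> laurent"
  shows "f * g \<in> laurent"
proof -
  obtain N M where N: "\<forall>n>N. fls_nth f n = 0" and M: "\<forall>n>M. fls_nth g n = 0"
    and ints: "\<forall>n. fls_nth f n \<in> \<int>" "\<forall>n. fls_nth g n \<in> \<int>"
    using assms unfolding laurent_iff by blast
  have "fls_nth (f * g) n = 0" if "n > N + M" for n
  proof -
    have "fls_nth f i * fls_nth g (n - i) = 0" for i
      using N M \<open>n > N + M\<close> by (cases "i > N") auto
    then show ?thesis unfolding fls_times_nth(2) by (simp add: sum.neutral)
  qed
  moreover have "\<forall>n. fls_nth (f * g) n \<in> \<int>"
    using ints unfolding fls_times_nth(2) by (intro allI Ints_sum Ints_mult) auto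
  ultimately show ?thesis unfolding laurent_iff by blast
qed

lemma laurent_one: "1 \<in> laurent"
  unfolding laurent_iff by (auto intro: exI[of _ 0])

lemma laurent_tt: "tt \<in> laurent"
  unfolding laurent_iff tt_def by (auto intro: exI[of _ 1])

lemma laurent_inverse_tt: "inverse tt \<in> laurent"
  unfolding laurent_iff tt_def fls_inverse_X by (auto intro: exI[of _ 0])

lemma laurent_power: "f \<in> laurent \<Longrightarrow> f ^ n \<in> laurent"
  by (induction n) (auto intro: laurent_mult laurent_one)

lemmas laurent_intros =
  laurent_add laurent_diff laurent_mult laurent_power laurent_one laurent_tt laurent_inverse_tt

lemma tt_nonzero: "tt \<noteq> 0"
  unfolding tt_def by simp

lemma one_plus_tt_nonzero: "1 + tt \<noteq> 0"
proof
  assume "1 + tt = 0"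
  then have "fls_nth (1 + tt) 0 = 0" by simp
  then show False unfolding tt_def by simp
qed

lemma one_plus_tt_plus_tt_sq_nonzero: "1 + tt + tt ^ 2 \<noteq> 0"
proof
  assume "1 + tt + tt ^ 2 = 0"
  then have "fls_nth (1 + tt + tt ^ 2) 0 = 0" by simp
  then show False unfolding tt_def by simp
qed

lemma laurent_loc_intro: "p \<in> laurent \<Longrightarrow> f = p * inverse ((1 + tt) ^ m) \<Longrightarrow> f \<in> laurent_loc"
  unfolding laurent_loc_def by blast

lemma laurent_subset_laurent_loc: "f \<in> laurent \<Longrightarrow> f \<in> laurent_loc"
  by (rule laurent_loc_intro[of f _ 0]) simp_all

lemma inverse_one_plus_tt_in_laurent_loc: "inverse (1 + tt) \<in> laurent_loc"
  by (rule laurent_loc_intro[OF laurent_one, of _ 1]) simp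

lemma laurent_loc_add:
  assumes "f \<in> laurent_loc" "g \<in> laurent_loc"
  shows "f + g \<in> laurent_loc"
proof -
  obtain p m q k where p: "p \<in> laurent" "f = p * inverse ((1 + tt) ^ m)"
    and q: "q \<in> laurent" "g = q * inverse ((1 + tt) ^ k)"
    using assms unfolding laurent_loc_def by blast
  have "f + g = (p * (1 + tt) ^ k + q * (1 + tt) ^ m) * inverse ((1 + tt) ^ (m + k))"
    using one_plus_tt_nonzero by (simp add: p q power_add field_simps)
  moreover have "p * (1 + tt) ^ k + q * (1 + tt) ^ m \<in> laurent"
    using p q by (intro laurent_intros)
  ultimately show ?thesis by (rule laurent_loc_intro[rotated])
qed

lemma laurent_loc_mult:
  assumes "f \<in> laurent_loc" "g \<in> laurent_loc"
  shows "f * g \<in> laurent_loc"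
proof -
  obtain p m q k where p: "p \<in> laurent" "f = p * inverse ((1 + tt) ^ m)"
    and q: "q \<in> laurent" "g = q * inverse ((1 + tt) ^ k)"
    using assms unfolding laurent_loc_def by blast
  have "f * g = (p * q) * inverse ((1 + tt) ^ (m + k))"
    unfolding p q power_add inverse_mult_distrib by (simp only: mult_ac)
  then show ?thesis using p q by (intro laurent_loc_intro[of "p * q"] laurent_mult)
qed

definition stab_v_ones :: "(K^3^3) set" where
  "stab_v_ones = {A. vrow v* A = vrow \<and> A *v ones3 = ones3}"

lemma burau_subset_stab_v_ones: "burau \<subseteq> stab_v_ones"
  unfolding burau_def stab_v_ones_def by blast

lemma stab_v_ones_inverse:
  assumes "A \<in> stab_v_ones" "A ** B = mat 1" "B ** A = mat 1"
  shows "B \<in> stab_v_ones"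
proof -
  have "vrow v* B = (vrow v* A) v* B" "B *v ones3 = B *v (A *v ones3)"
    using assms(1) by (simp_all add: stab_v_ones_def)
  then show ?thesis
    using assms(2,3)
    by (simp add: stab_v_ones_def vector_matrix_mul_assoc matrix_vector_mul_assoc)
qed

lemma stab_v_ones_entries:
  fixes A :: "K^3^3"
  assumes "A \<in> stab_v_ones"
  shows "A$1$3 = 1 - A$1$1 - A$1$2" "A$2$3 = 1 - A$2$1 - A$2$2" "A$3$3 = 1 - A$3$1 - A$3$2"
    "A$3$1 = (tt - tt * A$1$1 - tt^2 * A$2$1) * inverse tt ^ 3"
    "A$3$2 = (tt^2 - tt * A$1$2 - tt^2 * A$2$2) * inverse tt ^ 3"
proof -
  have v: "vrow v* A = vrow" and one: "A *v ones3 = ones3"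
    using assms by (simp_all add: stab_v_ones_def)
  have ones: "ones3 $ i = 1" for i
    using exhaust_3[of i] by (auto simp: ones3_def)
  have rows: "A$i$1 + A$i$2 + A$i$3 = 1" for i
    using arg_cong[OF one, of "\<lambda>x. x$i"] by (simp add: matrix_vector_mult_def sum_3 ones)
  have cols: "tt * A$1$j + tt^2 * A$2$j + tt^3 * A$3$j = vrow $ j" for j
    using arg_cong[OF v, of "\<lambda>x. x$j"] by (simp add: vector_matrix_mult_def sum_3 vrow_def)
  show "A$1$3 = 1 - A$1$1 - A$1$2" "A$2$3 = 1 - A$2$1 - A$2$2" "A$3$3 = 1 - A$3$1 - A$3$2"
    using rows[of 1] rows[of 2] rows[of 3] by (simp_all add: algebra_simps)
  have "tt ^ 3 \<noteq> 0" using tt_nonzero by simp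
  then have "A$3$1 = (tt - tt * A$1$1 - tt^2 * A$2$1) / tt ^ 3"
    "A$3$2 = (tt^2 - tt * A$1$2 - tt^2 * A$2$2) / tt ^ 3"
    using cols[of 1] cols[of 2] by (simp_all add: field_simps vrow_def)
  then show "A$3$1 = (tt - tt * A$1$1 - tt^2 * A$2$1) * inverse tt ^ 3"
    "A$3$2 = (tt^2 - tt * A$1$2 - tt^2 * A$2$2) * inverse tt ^ 3"
    by (simp_all add: divide_inverse power_inverse)
qed

lemma divide_tt_one_plus_tt: "x / (tt * (1 + tt)) = x * inverse tt * inverse (1 + tt)"
  by (simp add: divide_inverse)

lemmas phi_unfold = phi_def g1_def g2_def fk1_def fk2_def divide_tt_one_plus_tt

lemma tt_inverses: "tt * inverse tt = 1" "(1 + tt) * inverse (1 + tt) = 1"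
  using tt_nonzero one_plus_tt_nonzero by simp_all

lemma phi_mat_1: "phi (mat 1) = mat 1"
  unfolding vec_eq_iff forall_2 phi_unfold
  using tt_inverses by (simp add: mat_def) algebra+

lemma phi_mult:
  assumes "A \<in> stab_v_ones" "B \<in> stab_v_ones"
  shows "phi (A ** B) = phi A ** phi B"
  unfolding vec_eq_iff forall_2 phi_unfold
  using tt_inverses
  by (simp add: matrix_matrix_mult_def sum_2 sum_3 stab_v_ones_entries[OF assms(1)]
      stab_v_ones_entries[OF assms(2)]) algebra+

lemma det_phi:
  assumes "A \<in> stab_v_ones"
  shows "det (phi A) = det A"
  unfolding det_2 det_3 phi_unfold
  using tt_inverses by (simp add: stab_v_ones_entries[OF assms]) algebra

lemma phi_determines_upper_left_block:
  fixes A B :: "K^3^3"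
  assumes "phi A = phi B"
  shows "A$1$1 = B$1$1" "A$1$2 = B$1$2" "A$2$1 = B$2$1" "A$2$2 = B$2$2"
proof -
  have "inverse tt \<noteq> 0" "1 + tt \<noteq> 0" "tt * (1 + tt) \<noteq> 0" "1 + tt + tt^2 \<noteq> 0"
    using tt_nonzero one_plus_tt_nonzero one_plus_tt_plus_tt_sq_nonzero by simp_all
  then have g_eq: "g1 A 1 = g1 B 1" "g1 A 2 = g1 B 2" "g2 A 1 = g2 B 1" "g2 A 2 = g2 B 2"
    using arg_cong[OF assms, of "\<lambda>M :: K^2^2. M$1$1"] arg_cong[OF assms, of "\<lambda>M :: K^2^2. M$1$2"]
      arg_cong[OF assms, of "\<lambda>M :: K^2^2. M$2$1"] arg_cong[OF assms, of "\<lambda>M :: K^2^2. M$2$2"]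
    by (auto simp: phi_def)
  show first_col: "A$1$1 = B$1$1" "A$2$1 = B$2$1"
    using g_eq(1,2) \<open>tt * (1 + tt) \<noteq> 0\<close> \<open>1 + tt + tt^2 \<noteq> 0\<close> by (simp_all add: g1_def fk1_def)
  show "A$1$2 = B$1$2" "A$2$2 = B$2$2"
    using g_eq(3,4) first_col \<open>tt * (1 + tt) \<noteq> 0\<close> \<open>1 + tt \<noteq> 0\<close> by (simp_all add: g2_def fk2_def)
qed

lemma inj_on_phi_stab_v_ones: "inj_on phi stab_v_ones"
proof (rule inj_onI)
  fix A B assume A: "A \<in> stab_v_ones" and B: "B \<in> stab_v_ones" and "phi A = phi B"
  note block = phi_determines_upper_left_block[OF \<open>phi A = phi B\<close>]
  show "A = B"
    unfolding vec_eq_iff forall_3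
    by (simp add: stab_v_ones_entries[OF A] stab_v_ones_entries[OF B] block)
qed

lemma phi_entries_laurent_loc:
  fixes A :: "K^3^3"
  assumes "\<forall>i j. A$i$j \<in> laurent"
  shows "\<forall>i j. phi A $ i $ j \<in> laurent_loc"
proof -
  have g: "g1 A k \<in> laurent_loc" "g2 A k \<in> laurent_loc" for k
    unfolding g1_def g2_def fk1_def fk2_def divide_tt_one_plus_tt
    by (intro laurent_loc_mult laurent_subset_laurent_loc inverse_one_plus_tt_in_laurent_loc
        laurent_intros assms[rule_format])+
  have "inverse tt * g1 A 1 + (1 + tt) * g1 A 2 \<in> laurent_loc"
       "inverse tt * g2 A 1 + (1 + tt) * g2 A 2 \<in> laurent_loc"
    by (intro laurent_loc_add laurent_loc_mult laurent_subset_laurent_loc laurent_intros g)+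
  then show ?thesis unfolding forall_2 phi_def using g by simp
qed

lemma phi_GL_over_laurent_loc:
  fixes A :: "K^3^3"
  assumes "A \<in> stab_v_ones" "A \<in> GL_over laurent"
  shows "phi A \<in> GL_over laurent_loc"
proof -
  obtain B :: "K^3^3" where A_laurent: "\<forall>i j. A$i$j \<in> laurent" and B_laurent: "\<forall>i j. B$i$j \<in> laurent"
    and AB: "A ** B = mat 1" and BA: "B ** A = mat 1"
    using assms(2) unfolding GL_over_def by blast
  have B: "B \<in> stab_v_ones" using stab_v_ones_inverse[OF assms(1) AB BA] .
  have "phi A ** phi B = mat 1" "phi B ** phi A = mat 1"
    using phi_mult[OF assms(1) B] phi_mult[OF B assms(1)] AB BA phi_mat_1 by simp_all
  then show ?thesis
    unfolding GL_over_def
    using phi_entries_laurent_loc[OF A_laurent] phi_entries_laurent_loc[OF B_laurent] by blast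
qed

theorem lemma3p4:
  shows "(\<forall>A \<in> burau. phi A \<in> GL_over laurent_loc)
       \<and> (\<forall>A \<in> burau. \<forall>B \<in> burau. phi (A ** B) = phi A ** phi B)
       \<and> inj_on phi burau
       \<and> (\<forall>A \<in> burau. det (phi A) = det A)"
proof (intro conjI ballI)
  fix A assume "A \<in> burau"
  then have A: "A \<in> stab_v_ones" "A \<in> GL_over laurent"
    using burau_subset_stab_v_ones by (auto simp: burau_def)
  show "phi A \<in> GL_over laurent_loc" using phi_GL_over_laurent_loc[OF A] .
  show "det (phi A) = det A" using det_phi[OF A(1)] .
next
  fix A B assume "A \<in> burau" "B \<in> burau"
  then show "phi (A ** B) = phi A ** phi B"
    using burau_subset_stab_v_ones by (intro phi_mult) auto
next
  show "inj_on phi burau"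
    by (rule inj_on_subset[OF inj_on_phi_stab_v_ones burau_subset_stab_v_ones])
qed

end
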